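(* Let $f=a_0+a_1 z+\cdots+a_mz^m\in \mathbb{Z}[z]$ be primitive (the greatest common divisor of its coefficients is $1$). Suppose there exist positive real numbers $\alpha<\beta$ and an index $j\in\{0,1,\ldots,m\}$ such that \[ |a_j|\alpha^j >\left(\frac{\beta}{\alpha}\right)^{m-j}\sum_{i=0,\, i\neq j}^m |a_i|\alpha^i. \] Further, suppose there exist natural numbers $n$, $d$, $k$, $\ell\leq m$, and a prime $p$ with $p\nmid d$ such that $\beta-d\geq n\geq \alpha+d$, $f(n)=\pm p^k d$, $\gcd(k,\ell)=1$, $p^k$ divides $\frac{f^{(i)}(n)}{i!}$ for each $i=0, 1, \ldots,\ell-1$, and, in case $k>1$, also $p\nmid \frac{f^{(\ell)}(n)}{\ell!}$. Then $f$ is irreducible in $\mathbb{Z}[z]$.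
   Context: $f^{(i)}$ denotes the $i$-th derivative of $f$ with respect to $z$. Natural numbers are positive integers. *)

theory Defs
  imports "HOL-Computational_Algebra.Polynomial_Factorial"
begin

text \<open>The i-th derivative of f evaluated at x, divided by i! (an exact integer division).\<close>
definition taylor_coeff_at :: "int poly \<Rightarrow> nat \<Rightarrow> int \<Rightarrow> int" where
  "taylor_coeff_at f i x = poly ((pderiv ^^ i) f) x div fact i"

end

theory Submission
  imports Defs "HOL-Computational_Algebra.Fundamental_Theorem_Algebra"
begin

text \<open>
  The dominant term keeps every complex root of \<open>f\<close> off the annulus
  \<open>\<alpha> \<le> \<bar>z\<bar> \<le> \<beta>\<close>, hence at distance more than \<open>d\<close> from \<open>n\<close>; writing a nonconstant
  factor \<open>g\<close> of \<open>f\<close> as its leading coefficient times the product of the distances to its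
  roots gives \<open>\<bar>g(n)\<bar> > d\<close>. So if \<open>f = g h\<close> with both factors nonconstant (\<open>f\<close> is primitive),
  \<open>g(n)\<close> and \<open>h(n)\<close> divide \<open>p\<^sup>k d\<close> but not \<open>d\<close>, and \<open>p\<close> divides both.

  On the other hand, the coefficients of \<open>F(z) = f(z + n)\<close> are the Taylor coefficients of
  \<open>f\<close> at \<open>n\<close>, so the \<open>p\<close>-adic Newton polygon of \<open>F\<close> begins with the segment from \<open>(0, k)\<close> to \<open>(l, 0)\<close>,
  which contains no lattice point in its interior because \<open>gcd k l = 1\<close>. Newton polygons add
  under multiplication, so this segment comes from a single factor of \<open>F = G H\<close>, and the
  constant term of the other factor, \<open>g(n)\<close> or \<open>h(n)\<close>, is prime to \<open>p\<close>.
\<close>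

section \<open>Multiplicity of a sum\<close>

lemma ex_multiplicity_le_multiplicity_sum:
  fixes f :: "'b \<Rightarrow> 'a :: factorial_semiring"
  assumes "prime p" "sum f A \<noteq> 0"
  obtains x where "x \<in> A" "f x \<noteq> 0" "multiplicity p (f x) \<le> multiplicity p (sum f A)"
proof -
  have "\<exists>x\<in>A. f x \<noteq> 0 \<and> multiplicity p (f x) \<le> multiplicity p (sum f A)"
  proof (rule ccontr)
    assume "\<not> ?thesis"
    then have "p ^ Suc (multiplicity p (sum f A)) dvd f x" if "x \<in> A" for x
      using that
      by (cases "f x = 0") (auto intro!: multiplicity_dvd' simp: not_le Suc_le_eq simp del: power_Suc)
    then have "p ^ Suc (multiplicity p (sum f A)) dvd sum f A"
      by (rule dvd_sum)
    with assms show False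
      by (simp add: power_dvd_iff_le_multiplicity not_prime_unit del: power_Suc)
  qed
  with that show thesis
    by blast
qed

lemma multiplicity_add_eq:
  fixes a b :: "'a :: {factorial_semiring, comm_ring_1}"
  assumes "prime p" "a \<noteq> 0" "p ^ Suc (multiplicity p a) dvd b"
  shows "a + b \<noteq> 0" "multiplicity p (a + b) = multiplicity p a"
proof -
  have "p ^ multiplicity p a dvd b"
    using le_imp_power_dvd[of "multiplicity p a" "Suc (multiplicity p a)" p] assms(3)
    by (rule dvd_trans) simp
  then have "p ^ multiplicity p a dvd a + b"
    by (intro dvd_add multiplicity_dvd)
  moreover have "\<not> p ^ Suc (multiplicity p a) dvd a + b"
  proof -
    have "\<not> p ^ Suc (multiplicity p a) dvd a"
      using assms(1,2) by (simp add: power_dvd_iff_le_multiplicity not_prime_unit del: power_Suc)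
    with assms(3) show ?thesis
      by (simp add: dvd_add_left_iff del: power_Suc)
  qed
  ultimately show "multiplicity p (a + b) = multiplicity p a" "a + b \<noteq> 0"
    by (auto intro: multiplicity_eqI)
qed

section \<open>Newton polygons through weighted multiplicities\<close>

text \<open>The points \<open>(i, multiplicity p (coeff G i))\<close> of equal weight lie on a line of slope
  \<open>-k/l\<close>, so a last index of minimal weight is the right end of the part of the Newton
  polygon of \<open>G\<close> met by the supporting line of that slope. Zero coefficients, whose
  multiplicity is the junk value \<open>0\<close>, are excluded.\<close>

definition newton_weight :: "'a :: factorial_semiring \<Rightarrow> nat \<Rightarrow> nat \<Rightarrow> 'a poly \<Rightarrow> nat \<Rightarrow> nat" where
  "newton_weight p l k G i = l * multiplicity p (coeff G i) + k * i"

definition last_min_weight_index ::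
    "'a :: factorial_semiring \<Rightarrow> nat \<Rightarrow> nat \<Rightarrow> 'a poly \<Rightarrow> nat \<Rightarrow> bool" where
  "last_min_weight_index p l k G I \<longleftrightarrow> coeff G I \<noteq> 0 \<and>
     (\<forall>i. coeff G i \<noteq> 0 \<longrightarrow> newton_weight p l k G I \<le> newton_weight p l k G i) \<and>
     (\<forall>i>I. coeff G i \<noteq> 0 \<longrightarrow> newton_weight p l k G I < newton_weight p l k G i)"

lemma ex_last_minimizer:
  fixes S :: "'a :: linorder set" and w :: "'a \<Rightarrow> 'b :: linorder"
  assumes "finite S" "S \<noteq> {}"
  obtains I where "I \<in> S" "\<And>i. i \<in> S \<Longrightarrow> w I \<le> w i" "\<And>i. i \<in> S \<Longrightarrow> I < i \<Longrightarrow> w I < w i"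
proof -
  define T where "T = {i \<in> S. w i = Min (w ` S)}"
  have min: "Min (w ` S) \<le> w i" if "i \<in> S" for i
    using assms that by simp
  have "Min (w ` S) \<in> w ` S"
    using assms by simp
  then have "finite T" "T \<noteq> {}"
    using assms by (force simp: T_def)+
  then have max: "Max T \<in> T" "\<And>i. i \<in> T \<Longrightarrow> i \<le> Max T"
    by auto
  show thesis
  proof (rule that)
    show "Max T \<in> S" "\<And>i. i \<in> S \<Longrightarrow> w (Max T) \<le> w i"
      using max(1) min by (auto simp: T_def)
    show "w (Max T) < w i" if "i \<in> S" "Max T < i" for i
    proof -
      have "i \<notin> T"
        using max(2) that(2) by force
      then show ?thesis
        using max(1) min[OF that(1)] that(1) by (auto simp: T_def)
    qed
  qed
qed

lemma ex_last_min_weight_index: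
  assumes "G \<noteq> 0"
  obtains I where "last_min_weight_index p l k G I"
proof -
  define S where "S = {i. coeff G i \<noteq> 0}"
  have "finite S"
    unfolding S_def by (rule finite_subset[of _ "{..degree G}"]) (auto intro: le_degree)
  moreover have "S \<noteq> {}"
    using assms leading_coeff_neq_0 unfolding S_def by blast
  ultimately obtain I where "I \<in> S"
    "\<And>i. i \<in> S \<Longrightarrow> newton_weight p l k G I \<le> newton_weight p l k G i"
    "\<And>i. i \<in> S \<Longrightarrow> I < i \<Longrightarrow> newton_weight p l k G I < newton_weight p l k G i"
    using ex_last_minimizer[of S "newton_weight p l k G"] by blast
  then show thesis
    by (intro that[of I]) (simp add: last_min_weight_index_def S_def)
qed

lemma last_min_weight_index_unique:
  assumes "last_min_weight_index p l k G I" "last_min_weight_index p l k G J"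
  shows "I = J"
proof -
  have "\<not> I < J" if "last_min_weight_index p l k G I" "last_min_weight_index p l k G J" for I J
    using that unfolding last_min_weight_index_def by (meson leD)
  with assms show "I = J"
    by (meson linorder_neqE_nat)
qed

lemma newton_weight_mult_coeffs:
  assumes "prime p" "coeff G i * coeff H j \<noteq> 0"
  shows "l * multiplicity p (coeff G i * coeff H j) + k * (i + j) =
    newton_weight p l k G i + newton_weight p l k H j"
  using assms
  by (simp add: prime_elem_multiplicity_mult_distrib newton_weight_def algebra_simps)

lemma ex_newton_weight_mult_coeffs_le:
  fixes G H :: "'a :: factorial_semiring poly"
  assumes p: "prime p" and "coeff (G * H) N \<noteq> 0"
  obtains i where "i \<le> N" "coeff G i * coeff H (N - i) \<noteq> 0"
    "newton_weight p l k G i + newton_weight p l k H (N - i) \<le> newton_weight p l k (G * H) N"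
proof -
  have "(\<Sum>i\<le>N. coeff G i * coeff H (N - i)) \<noteq> 0"
    using assms(2) by (simp add: coeff_mult)
  then obtain i where "i \<in> {..N}" and nz: "coeff G i * coeff H (N - i) \<noteq> 0"
    and le: "multiplicity p (coeff G i * coeff H (N - i)) \<le> multiplicity p (coeff (G * H) N)"
    unfolding coeff_mult by (rule ex_multiplicity_le_multiplicity_sum[OF p])
  moreover have "i + (N - i) = N"
    using \<open>i \<in> {..N}\<close> by simp
  ultimately show thesis
    using that newton_weight_mult_coeffs[OF p nz, of l k] mult_le_mono2[OF le, of l]
    unfolding newton_weight_def by fastforce
qed

lemma last_min_weight_index_add_less:
  assumes "last_min_weight_index p l k G IG" "last_min_weight_index p l k H IH"
    and "coeff G i * coeff H j \<noteq> 0" "IG < i \<or> IH < j"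
  shows "newton_weight p l k G IG + newton_weight p l k H IH <
    newton_weight p l k G i + newton_weight p l k H j"
proof -
  have "coeff G i \<noteq> 0" "coeff H j \<noteq> 0"
    using assms(3) by auto
  with assms(1,2) have "newton_weight p l k G IG \<le> newton_weight p l k G i"
    "newton_weight p l k H IH \<le> newton_weight p l k H j"
    "IG < i \<Longrightarrow> newton_weight p l k G IG < newton_weight p l k G i"
    "IH < j \<Longrightarrow> newton_weight p l k H IH < newton_weight p l k H j"
    unfolding last_min_weight_index_def by auto
  with assms(4) show ?thesis
    by linarith
qed

text \<open>In the coefficient of \<open>z ^ (IG + IH)\<close> of the product, every term other than
  \<open>coeff G IG * coeff H IH\<close> has strictly larger weight, so it cannot cancel.\<close>

lemma newton_weight_mult_last_min:
  fixes G H :: "'a :: {factorial_semiring, comm_ring_1} poly"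
  assumes p: "prime p"
    and IG: "last_min_weight_index p l k G IG" and IH: "last_min_weight_index p l k H IH"
  shows "coeff (G * H) (IG + IH) \<noteq> 0"
    and "newton_weight p l k (G * H) (IG + IH) = newton_weight p l k G IG + newton_weight p l k H IH"
proof -
  define N where "N = IG + IH"
  define v where "v = multiplicity p (coeff G IG * coeff H IH)"
  have nz: "coeff G IG * coeff H IH \<noteq> 0"
    using IG IH by (simp add: last_min_weight_index_def)
  have "p ^ Suc v dvd (\<Sum>i\<in>{..N} - {IG}. coeff G i * coeff H (N - i))"
  proof (rule dvd_sum)
    fix i assume i: "i \<in> {..N} - {IG}"
    show "p ^ Suc v dvd coeff G i * coeff H (N - i)"
    proof (cases "coeff G i * coeff H (N - i) = 0")
      case False
      have "IG < i \<or> IH < N - i" "i + (N - i) = N"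
        using i by (auto simp: N_def)
      then have "l * v + k * N < l * multiplicity p (coeff G i * coeff H (N - i)) + k * N"
        using last_min_weight_index_add_less[OF IG IH False] newton_weight_mult_coeffs[OF p False]
          newton_weight_mult_coeffs[OF p nz]
        unfolding N_def v_def by auto
      then show ?thesis
        by (intro multiplicity_dvd') simp
    qed (simp only: dvd_0_right)
  qed
  moreover have "coeff (G * H) N =
      coeff G IG * coeff H IH + (\<Sum>i\<in>{..N} - {IG}. coeff G i * coeff H (N - i))"
    unfolding coeff_mult N_def by (subst sum.remove[of _ IG]) auto
  ultimately have "coeff (G * H) N \<noteq> 0" "multiplicity p (coeff (G * H) N) = v"
    using multiplicity_add_eq[OF p nz] by (simp_all add: v_def)
  then show "coeff (G * H) (IG + IH) \<noteq> 0"
    and "newton_weight p l k (G * H) (IG + IH) = newton_weight p l k G IG + newton_weight p l k H IH"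
    using newton_weight_mult_coeffs[OF p nz] by (simp_all add: newton_weight_def v_def N_def)
qed

lemma last_min_weight_index_mult:
  fixes G H :: "'a :: {factorial_semiring, comm_ring_1} poly"
  assumes p: "prime p"
    and IG: "last_min_weight_index p l k G IG" and IH: "last_min_weight_index p l k H IH"
  shows "last_min_weight_index p l k (G * H) (IG + IH)"
proof -
  let ?m = "newton_weight p l k G IG + newton_weight p l k H IH"
  have "?m \<le> newton_weight p l k (G * H) N" if nz: "coeff (G * H) N \<noteq> 0" for N
  proof -
    obtain i where "i \<le> N" and nz_i: "coeff G i * coeff H (N - i) \<noteq> 0"
      and le: "newton_weight p l k G i + newton_weight p l k H (N - i) \<le>
        newton_weight p l k (G * H) N"
      using ex_newton_weight_mult_coeffs_le[OF p nz] .
    have "coeff G i \<noteq> 0" "coeff H (N - i) \<noteq> 0"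
      using nz_i by auto
    with IG IH have "newton_weight p l k G IG \<le> newton_weight p l k G i"
      "newton_weight p l k H IH \<le> newton_weight p l k H (N - i)"
      unfolding last_min_weight_index_def by auto
    with le show ?thesis
      by linarith
  qed
  moreover have "?m < newton_weight p l k (G * H) N"
    if N: "IG + IH < N" and nz: "coeff (G * H) N \<noteq> 0" for N
  proof -
    obtain i where "i \<le> N" and nz_i: "coeff G i * coeff H (N - i) \<noteq> 0"
      and le: "newton_weight p l k G i + newton_weight p l k H (N - i) \<le>
        newton_weight p l k (G * H) N"
      using ex_newton_weight_mult_coeffs_le[OF p nz] .
    moreover have "IG < i \<or> IH < N - i"
      using N \<open>i \<le> N\<close> by linarith
    ultimately show ?thesis
      using last_min_weight_index_add_less[OF IG IH nz_i] by linarith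
  qed
  ultimately show ?thesis
    using newton_weight_mult_last_min[OF p IG IH] by (simp add: last_min_weight_index_def)
qed

lemma last_min_weight_index_newton_edge:
  assumes p: "prime p" and "0 < k"
    and below: "\<And>i. i < l \<Longrightarrow> p ^ k dvd coeff F i"
    and Fl: "\<not> p dvd coeff F l"
  shows "last_min_weight_index p l k F l" "newton_weight p l k F l = k * l"
proof -
  have vl: "multiplicity p (coeff F l) = 0"
    using Fl by (rule not_dvd_imp_multiplicity_0)
  then show wl: "newton_weight p l k F l = k * l"
    by (simp add: newton_weight_def)
  have "k * l \<le> newton_weight p l k F i" if "coeff F i \<noteq> 0" for i
  proof (cases "i < l")
    case True
    then have "k \<le> multiplicity p (coeff F i)"
      using below p that by (intro multiplicity_geI) (auto simp: not_prime_unit)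
    then have "k * l \<le> l * multiplicity p (coeff F i)"
      by (metis mult.commute mult_le_mono2)
    then show ?thesis
      unfolding newton_weight_def by linarith
  qed (simp add: newton_weight_def trans_le_add2)
  moreover have "k * l < newton_weight p l k F i" if "l < i" for i
    using that \<open>0 < k\<close> by (simp add: newton_weight_def trans_less_add2)
  moreover have "coeff F l \<noteq> 0"
    using Fl by auto
  ultimately show "last_min_weight_index p l k F l"
    by (simp add: last_min_weight_index_def wl)
qed

text \<open>With \<open>gcd k l = 1\<close>, the segment from \<open>(0, c)\<close> of slope \<open>-k/l\<close> meets no lattice point
  \<open>(I, v)\<close> with \<open>0 < I < l\<close>.\<close>

lemma coprime_edge_lattice_point:
  fixes k l I v c :: nat
  assumes "coprime k l" "0 < l" "l * v + k * I = l * c" "I \<le> l" "c < k"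
  shows "I = 0"
proof -
  have "l dvd k * I"
    using assms(3) by (metis dvd_add_right_iff dvd_triv_left)
  then have "l dvd I"
    using assms(1) by (simp add: coprime_commute coprime_dvd_mult_right_iff)
  moreover have "I \<noteq> l"
  proof
    assume "I = l"
    with assms(3) have "l * k \<le> l * c"
      by (metis le_add2 mult.commute)
    with assms(2,5) show False
      by simp
  qed
  ultimately show "I = 0"
    using assms(4) dvd_imp_le by fastforce
qed

lemma newton_edge_not_dvd_coeff_0:
  fixes G H :: "'a :: {factorial_semiring, comm_ring_1} poly"
  assumes p: "prime p" and l: "0 < l" and cop: "coprime k l"
    and F0: "coeff (G * H) 0 \<noteq> 0" "multiplicity p (coeff (G * H) 0) = k"
    and below: "\<And>i. i < l \<Longrightarrow> p ^ k dvd coeff (G * H) i"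
    and Fl: "\<not> p dvd coeff (G * H) l"
  shows "\<not> p dvd coeff G 0 \<or> \<not> p dvd coeff H 0"
proof (rule ccontr)
  assume "\<not> ?thesis"
  then have dvd0: "p dvd coeff G 0" "p dvd coeff H 0"
    by auto
  define a b where "a = multiplicity p (coeff G 0)" and "b = multiplicity p (coeff H 0)"
  have nz0: "coeff G 0 \<noteq> 0" "coeff H 0 \<noteq> 0"
    using F0(1) by (auto simp: coeff_mult_0)
  have "a \<ge> 1" "b \<ge> 1"
    using dvd0 nz0 p multiplicity_geI[of _ p 1] by (auto simp: a_def b_def not_prime_unit)
  moreover have k: "a + b = k"
    using F0 nz0 p by (simp add: coeff_mult_0 prime_elem_multiplicity_mult_distrib a_def b_def)
  ultimately have "a < k" "b < k" "0 < k"
    by auto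
  obtain IG IH where IG: "last_min_weight_index p l k G IG"
    and IH: "last_min_weight_index p l k H IH"
    using nz0 ex_last_min_weight_index by (metis coeff_0)
  note edge = last_min_weight_index_newton_edge[OF p \<open>0 < k\<close> below Fl]
  have sum_l: "IG + IH = l"
    using last_min_weight_index_mult[OF p IG IH] edge(1) by (rule last_min_weight_index_unique)
  then have "newton_weight p l k G IG + newton_weight p l k H IH = l * a + l * b"
    using newton_weight_mult_last_min(2)[OF p IG IH] edge(2) k[symmetric] by (simp add: algebra_simps)
  moreover have "newton_weight p l k G IG \<le> newton_weight p l k G 0"
    "newton_weight p l k H IH \<le> newton_weight p l k H 0"
    using IG IH nz0 by (simp_all add: last_min_weight_index_def)
  ultimately have "l * multiplicity p (coeff G IG) + k * IG = l * a"
    "l * multiplicity p (coeff H IH) + k * IH = l * b"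
    by (simp_all add: newton_weight_def a_def b_def)
  then have "IG = 0" "IH = 0"
    using coprime_edge_lattice_point[OF cop l] sum_l \<open>a < k\<close> \<open>b < k\<close> by auto
  with sum_l l show False
    by simp
qed

section \<open>Location of the roots\<close>

lemma power_le_power_mult_power:
  fixes t s :: "'a :: linordered_semidom"
  assumes "1 \<le> t" "t \<le> s" "i \<le> m"
  shows "t ^ i \<le> t ^ j * s ^ (m - j)"
proof -
  have "0 \<le> t"
    using order.trans[OF zero_le_one assms(1)] .
  then have t0: "0 \<le> t" "0 \<le> t ^ j"
    by simp_all
  show ?thesis
  proof (cases "i \<le> j")
    case True
    then have "t ^ i \<le> t ^ j"
      using assms(1) by (simp add: power_increasing)
    also have "\<dots> \<le> t ^ j * s ^ (m - j)"
      using assms(1,2) t0 mult_left_mono[of 1 "s ^ (m - j)" "t ^ j"] by (simp add: one_le_power)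
    finally show ?thesis .
  next
    case False
    then have "t ^ i = t ^ j * t ^ (i - j)"
      by (simp flip: power_add)
    also have "\<dots> \<le> t ^ j * s ^ (i - j)"
      using assms(1,2) t0 by (intro mult_left_mono power_mono) auto
    also have "\<dots> \<le> t ^ j * s ^ (m - j)"
      using assms t0 by (intro mult_left_mono power_increasing) auto
    finally show ?thesis .
  qed
qed

text \<open>With \<open>t = \<bar>z\<bar> / \<alpha> \<in> [1, \<beta> / \<alpha>]\<close>, every term \<open>\<bar>c\<^sub>i z ^ i\<bar>\<close> is at most
  \<open>t ^ j (\<beta> / \<alpha>) ^ (m - j) \<bar>c\<^sub>i\<bar> \<alpha> ^ i\<close>, so the \<open>j\<close>-th term outweighs all the others.\<close>

lemma poly_neq_0_in_annulus:
  fixes f :: "'a :: real_normed_field poly"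
  assumes "0 < \<alpha>" "\<alpha> \<le> norm z" "norm z \<le> \<beta>" "j \<le> degree f"
    and dom: "norm (coeff f j) * \<alpha> ^ j >
              (\<beta> / \<alpha>) ^ (degree f - j) * (\<Sum>i\<in>{0..degree f} - {j}. norm (coeff f i) * \<alpha> ^ i)"
  shows "poly f z \<noteq> 0"
proof
  assume root: "poly f z = 0"
  define m t s where "m = degree f" and "t = norm z / \<alpha>" and "s = \<beta> / \<alpha>"
  have t: "1 \<le> t" "t \<le> s"
    using assms(1-3) by (simp_all add: t_def s_def divide_right_mono)
  have z_pow: "norm z ^ i = t ^ i * \<alpha> ^ i" for i
    using assms(1) by (simp add: t_def power_divide)
  have t_pow: "t ^ i \<le> t ^ j * s ^ (m - j)" if "i \<le> m" for i
    using t that by (rule power_le_power_mult_power)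
  have "poly f z = coeff f j * z ^ j + (\<Sum>i\<in>{0..m} - {j}. coeff f i * z ^ i)"
    using assms(4) by (simp add: poly_altdef m_def atLeast0AtMost sum.remove)
  then have "norm (coeff f j) * norm z ^ j = norm (\<Sum>i\<in>{0..m} - {j}. coeff f i * z ^ i)"
    using root by (simp add: add_eq_0_iff norm_mult norm_power)
  also have "\<dots> \<le> (\<Sum>i\<in>{0..m} - {j}. norm (coeff f i) * norm z ^ i)"
    by (rule norm_sum[THEN order_trans]) (simp add: norm_mult norm_power)
  also have "\<dots> \<le> (\<Sum>i\<in>{0..m} - {j}. t ^ j * s ^ (m - j) * (norm (coeff f i) * \<alpha> ^ i))"
  proof (rule sum_mono)
    fix i assume "i \<in> {0..m} - {j}"
    then have "t ^ i * (norm (coeff f i) * \<alpha> ^ i) \<le> t ^ j * s ^ (m - j) * (norm (coeff f i) * \<alpha> ^ i)"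
      using t_pow assms(1) by (intro mult_right_mono) auto
    then show "norm (coeff f i) * norm z ^ i \<le> t ^ j * s ^ (m - j) * (norm (coeff f i) * \<alpha> ^ i)"
      by (simp add: z_pow mult_ac)
  qed
  also have "\<dots> < t ^ j * (norm (coeff f j) * \<alpha> ^ j)"
    using dom t(1) by (simp add: sum_distrib_left[symmetric] mult.assoc m_def s_def)
  also have "\<dots> = norm (coeff f j) * norm z ^ j"
    by (simp add: z_pow)
  finally show False
    by simp
qed

lemma dist_root_gt_of_dominant_coeff:
  fixes f :: "int poly" and z :: complex and \<alpha> \<beta> d x :: real
  assumes "0 < \<alpha>" "j \<le> degree f"
    and dom: "\<bar>coeff f j\<bar> * \<alpha> ^ j >
              (\<beta> / \<alpha>) ^ (degree f - j) * (\<Sum>i\<in>{0..degree f} - {j}. \<bar>coeff f i\<bar> * \<alpha> ^ i)"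
    and "0 \<le> d" "\<alpha> + d \<le> x" "x \<le> \<beta> - d"
    and "poly (map_poly of_int f) z = 0"
  shows "d < dist (of_real x) z"
proof -
  have "\<not> (\<alpha> \<le> norm z \<and> norm z \<le> \<beta>)"
    using poly_neq_0_in_annulus[of \<alpha> z \<beta> j "map_poly of_int f"] assms(1,2,7) dom
    by (auto simp: degree_map_poly coeff_map_poly simp flip: of_int_abs)
  then show ?thesis
    using assms(1,4-6) norm_triangle_ineq2[of z "of_real x"] norm_triangle_ineq3[of "of_real x" z]
    by (auto simp: dist_norm norm_minus_commute)
qed

lemma norm_poly_gt_if_roots_far:
  fixes G :: "complex poly"
  assumes "0 < degree G" "0 \<le> d" and far: "\<And>z. poly G z = 0 \<Longrightarrow> d < dist x z"
  shows "d ^ degree G * norm (lead_coeff G) < norm (poly G x)"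
proof -
  obtain r where dec: "smult (lead_coeff G) (\<Prod>i<degree G. [:- r i, 1:]) = G"
    using complex_poly_decompose' by blast
  have poly_G: "poly G y = lead_coeff G * (\<Prod>i<degree G. y - r i)" for y
    by (subst dec[symmetric]) (simp add: poly_prod)
  have "poly G (r i) = 0" if "i < degree G" for i
    using that by (auto simp: poly_G prod_zero_iff)
  then have far_r: "d < norm (x - r i)" if "i < degree G" for i
    using far that by (simp add: dist_norm)
  have "(\<Prod>i<degree G. d) < (\<Prod>i<degree G. norm (x - r i))"
  proof (rule prod_mono_strict[of 0])
    show "0 \<in> {..<degree G}" "d < norm (x - r 0)"
      using assms(1) far_r by auto
    show "0 \<le> d \<and> d \<le> norm (x - r i)" "0 < norm (x - r i)" if "i \<in> {..<degree G}" for i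
      using assms(2) far_r[of i] that by auto
  qed simp
  moreover have "0 < norm (lead_coeff G)"
    using assms(1) by auto
  ultimately show ?thesis
    by (simp add: poly_G norm_mult prod_norm)
qed

lemma map_poly_of_int_mult:
  "map_poly (of_int :: int \<Rightarrow> 'a :: comm_ring_1) (p * q) = map_poly of_int p * map_poly of_int q"
  by (intro poly_eqI) (simp add: coeff_map_poly coeff_mult)

lemma poly_map_poly_of_int:
  "poly (map_poly (of_int :: int \<Rightarrow> 'a :: comm_ring_1) p) (of_int x) = of_int (poly p x)"
  by (induction p) (simp_all add: map_poly_pCons)

lemma abs_poly_factor_gt:
  fixes f g :: "int poly" and x :: int and d :: real
  assumes "g dvd f" "f \<noteq> 0" "0 < degree g" "1 \<le> d"
    and far: "\<And>z :: complex. poly (map_poly of_int f) z = 0 \<Longrightarrow> d < dist (of_int x) z"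
  shows "d < \<bar>poly g x\<bar>"
proof -
  define G where "G = map_poly (of_int :: int \<Rightarrow> complex) g"
  have degG: "degree G = degree g"
    by (simp add: G_def degree_map_poly)
  obtain h where "f = g * h"
    using assms(1) by blast
  then have G_far: "d < dist (of_int x) z" if "poly G z = 0" for z
    using far that by (simp add: G_def map_poly_of_int_mult)
  have "lead_coeff g \<noteq> 0"
    using assms(3) by auto
  then have "1 \<le> \<bar>lead_coeff g\<bar>"
    by linarith
  then have lc: "1 \<le> norm (lead_coeff G)"
    unfolding degG by (simp add: G_def coeff_map_poly flip: of_int_abs)
  have "d \<le> d ^ degree g"
    using assms(3,4) by (simp add: power_increasing[of 1, simplified])
  also have "\<dots> \<le> d ^ degree g * norm (lead_coeff G)"
    using lc assms(4) by (simp add: mult_le_cancel_left1)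
  also have "\<dots> < norm (poly G (of_int x))"
    using norm_poly_gt_if_roots_far[of G d, OF _ _ G_far] assms(3,4) by (simp add: degG)
  also have "\<dots> = \<bar>poly g x\<bar>"
    by (simp add: G_def poly_map_poly_of_int)
  finally show ?thesis .
qed

section \<open>Factors at the point of evaluation\<close>

lemma higher_pderiv_pcompose_shift:
  fixes f :: "'a :: idom poly"
  shows "(pderiv ^^ i) (pcompose f [:x, 1:]) = pcompose ((pderiv ^^ i) f) [:x, 1:]"
  by (induction i) (simp_all add: pderiv_pcompose pderiv_pCons)

lemma coeff_pcompose_shift:
  "coeff (pcompose f [:x, 1:]) i = taylor_coeff_at f i x"
proof -
  have "poly ((pderiv ^^ i) f) x = poly ((pderiv ^^ i) (pcompose f [:x, 1:])) 0"
    by (simp add: higher_pderiv_pcompose_shift poly_pcompose)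
  also have "\<dots> = fact i * coeff (pcompose f [:x, 1:]) i"
    by (simp add: poly_0_coeff_0 coeff_higher_pderiv pochhammer_fact)
  finally show ?thesis
    by (simp add: taylor_coeff_at_def)
qed

lemma degree_pos_of_primitive_factor:
  fixes f g :: "int poly"
  assumes "content f = 1" "g dvd f" "\<not> is_unit g"
  shows "0 < degree g"
proof (rule ccontr)
  assume "\<not> 0 < degree g"
  then obtain c where "g = [:c:]"
    by (metis degree_eq_zeroE neq0_conv)
  moreover have "content g = 1"
    using content_dvd_contentI[OF assms(2)] assms(1) is_unit_content_iff by metis
  ultimately show False
    using assms(3) by (simp add: is_unit_poly_iff normalize_1_iff)
qed

lemma prime_dvd_if_dvd_prime_power_mult:
  fixes q x d :: "'a :: factorial_semiring_gcd"
  assumes "prime q" "x dvd q ^ k * d" "\<not> x dvd d"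
  shows "q dvd x"
proof (rule ccontr)
  assume "\<not> q dvd x"
  with assms(1) have "coprime q x"
    by (rule prime_imp_coprime)
  then have "coprime x (q ^ k)"
    by (simp add: coprime_commute)
  then show False
    using assms(2,3) by (simp add: coprime_dvd_mult_right_iff)
qed

lemma prime_dvd_poly_factor:
  fixes f u :: "int poly" and q x :: int and d :: nat
  assumes "prime q" "content f = 1" "u dvd f" "\<not> is_unit u" "1 \<le> d"
    and "poly f x dvd q ^ k * int d"
    and far: "\<And>z :: complex. poly (map_poly of_int f) z = 0 \<Longrightarrow> real d < dist (of_int x) z"
  shows "q dvd poly u x"
proof (rule prime_dvd_if_dvd_prime_power_mult[OF assms(1)])
  have "poly u x dvd poly f x"
    using assms(3) by (auto elim!: dvdE)
  then show "poly u x dvd q ^ k * int d"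
    using assms(6) by (rule dvd_trans)
  have "f \<noteq> 0"
    using assms(2) by auto
  then have "real d < \<bar>poly u x\<bar>"
    using abs_poly_factor_gt[OF assms(3) _ degree_pos_of_primitive_factor[OF assms(2-4)] _ far] assms(5)
    by simp
  then have "int d < \<bar>poly u x\<bar>"
    by linarith
  then show "\<not> poly u x dvd int d"
    using assms(5) dvd_imp_le_int[of "int d" "poly u x"] by auto
qed

lemma prime_not_dvd_factors_at_newton_edge:
  fixes f g h :: "int poly" and q x :: int
  assumes q: "prime q" and fgh: "f = g * h" and "0 < l" "coprime k l"
    and fx: "poly f x \<noteq> 0" "multiplicity q (poly f x) = k"
    and below: "\<And>i. i < l \<Longrightarrow> q ^ k dvd taylor_coeff_at f i x"
    and edge: "1 < k \<Longrightarrow> \<not> q dvd taylor_coeff_at f l x"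
  shows "\<not> q dvd poly g x \<or> \<not> q dvd poly h x"
proof (rule ccontr)
  assume "\<not> ?thesis"
  then have dvd_gh: "q dvd poly g x" "q dvd poly h x"
    by auto
  then have "q ^ 2 dvd poly f x"
    using fgh by (auto simp: power2_eq_square intro: mult_dvd_mono)
  then have "1 < k"
    using fx q multiplicity_geI[of "poly f x" q 2] by (auto simp: not_prime_unit)
  define G H where "G = pcompose g [:x, 1:]" and "H = pcompose h [:x, 1:]"
  have GH: "coeff (G * H) i = taylor_coeff_at f i x" for i
    by (simp add: G_def H_def fgh pcompose_mult flip: coeff_pcompose_shift)
  have "coeff G 0 = poly g x" "coeff H 0 = poly h x"
    by (simp_all add: G_def H_def coeff_pcompose_shift taylor_coeff_at_def)
  moreover have "coeff (G * H) 0 = poly f x"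
    by (simp add: GH taylor_coeff_at_def)
  ultimately show False
    using newton_edge_not_dvd_coeff_0[OF q assms(3,4), of G H] fx below edge[OF \<open>1 < k\<close>] dvd_gh
    by (simp add: GH)
qed

theorem theorem3:
  fixes f :: "int poly" and \<alpha> \<beta> :: real and j n d k l p :: nat
  assumes prim: "content f = 1"
    and ab: "0 < \<alpha>" "\<alpha> < \<beta>"
    and j: "j \<le> degree f"
    and dom: "\<bar>coeff f j\<bar> * \<alpha> ^ j >
              (\<beta> / \<alpha>) ^ (degree f - j) *
              (\<Sum>i\<in>{0..degree f} - {j}. \<bar>coeff f i\<bar> * \<alpha> ^ i)"
    and pos: "n \<ge> 1" "d \<ge> 1" "k \<ge> 1" "l \<ge> 1"
    and l: "l \<le> degree f"
    and p: "prime p" "\<not> p dvd d"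
    and nb: "\<beta> - real d \<ge> real n" "real n \<ge> \<alpha> + real d"
    and fn: "poly f (int n) = int (p ^ k * d) \<or> poly f (int n) = - int (p ^ k * d)"
    and cop: "gcd k l = 1"
    and dvd: "\<And>i. i < l \<Longrightarrow> int (p ^ k) dvd taylor_coeff_at f i (int n)"
    and ndvd: "k > 1 \<Longrightarrow> \<not> int p dvd taylor_coeff_at f l (int n)"
  shows "irreducible f"
proof (rule irreducibleI)
  have "0 < degree f"
    using l pos(4) by linarith
  then show "f \<noteq> 0" and "\<not> is_unit f"
    by (auto simp: is_unit_poly_iff)
  have far: "real d < dist (of_int (int n)) z" if "poly (map_poly of_int f) z = 0" for z :: complex
    using dist_root_gt_of_dominant_coeff[OF ab(1) j dom _ _ _ that, of "real d" "real n"] nb by simp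
  have fn_dvd: "poly f (int n) dvd int p ^ k * int d"
    using fn by auto
  have fn0: "poly f (int n) \<noteq> 0"
    using fn pos(2) p(1) by (auto simp: prime_gt_0_nat)
  have "multiplicity (int p) (int p ^ k * int d) = k"
    using p by (intro multiplicity_decomposeI) auto
  then have mult_fn: "multiplicity (int p) (poly f (int n)) = k"
    using fn multiplicity_times_unit_right[of "-1 :: int" "int p" "int p ^ k * int d"] by auto
  fix g h assume fgh: "f = g * h"
  show "is_unit g \<or> is_unit h"
  proof (rule ccontr)
    assume "\<not> ?thesis"
    then have "int p dvd poly g (int n)" "int p dvd poly h (int n)"
      using prime_dvd_poly_factor[OF _ prim _ _ pos(2) fn_dvd far] p(1) fgh by auto
    moreover have "\<not> int p dvd poly g (int n) \<or> \<not> int p dvd poly h (int n)"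
    proof (rule prime_not_dvd_factors_at_newton_edge[OF _ fgh _ _ fn0 mult_fn])
      show "prime (int p)" "0 < l" "coprime k l"
        using p(1) pos(4) cop by (simp_all add: coprime_iff_gcd_eq_1)
      show "int p ^ k dvd taylor_coeff_at f i (int n)" if "i < l" for i
        using dvd[OF that] by simp
    qed (use ndvd in simp)
    ultimately show False
      by blast
  qed
qed

end
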